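(* Let $F$ be a uniform dill map on $A^{\mathbb N}$ and $m\in\mathbb N$. Consider $F$ and $G=\sigma^m\circ F$ as maps on $A^{\mathbb N}$ equipped with the Besicovitch pseudo-metric $\mathfrak d_H$. Then: (1) if $F$ is sensitive, then $G$ is sensitive; (2) if $x$ is an equicontinuous point of $F$, then $x$ is an equicontinuous point of $G$; (3) if $F$ is equicontinuous, then $G$ is equicontinuous.
   Context: $A$ is a finite alphabet, $\sigma$ the shift $\sigma(x)_i=x_{i+1}$ on $A^{\mathbb N}$, $x_{[i,j)}=x_i\cdots x_{j-1}$. A dill map with diameter $\delta\ge1$ and local rule $f:A^\delta\to A^+$ is $F(x)=f(x_{[0,\delta)})f(x_{[1,\delta+1)})\cdots$; it is uniform if all words $f(u)$, $u\in A^\delta$, have the same length. For equal-length words $d_H(u,v)$ is the number of differing positions, and $\mathfrak d_H(x,y)=\limsup_{l\to\infty}d_H(x_{[0,l)},y_{[0,l)})/l$. For a map $H$ and pseudo-metric $d=\mathfrak d_H$: $x$ is an equicontinuous point of $H$ if $\forall\varepsilon>0\ \exists\eta>0\ \forall y,\ d(x,y)<\eta\Rightarrow\forall t\in\mathbb N,\ d(H^t(x),H^t(y))<\varepsilon$; $H$ is equicontinuous if $\forall\varepsilon>0\ \exists\eta>0\ \forall x,y,\ d(x,y)<\eta\Rightarrow\forall t,\ d(H^t(x),H^t(y))<\varepsilon$; $H$ is sensitive if $\exists\varepsilon>0\ \forall x\ \forall\eta>0\ \exists y,\ d(x,y)<\eta$ and $\exists t\in\mathbb N,\ d(H^t(x),H^t(y))>\varepsilon$.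 *)

theory Defs
  imports "HOL-Analysis.Analysis" "HOL-Library.Liminf_Limsup"
begin

definition shift :: "(nat \<Rightarrow> 'a) \<Rightarrow> (nat \<Rightarrow> 'a)" where
  "shift x = (\<lambda>i. x (Suc i))"

text \<open>Infinite concatenation w 0 w 1 w 2 ... of (nonempty) finite words.\<close>
definition iconcat :: "(nat \<Rightarrow> 'a list) \<Rightarrow> nat \<Rightarrow> 'a" where
  "iconcat w n =
     (let S = (\<lambda>k. \<Sum>j<k. length (w j));
          k = (LEAST k. n < S (Suc k))
      in w k ! (n - S k))"

definition factor :: "(nat \<Rightarrow> 'a) \<Rightarrow> nat \<Rightarrow> nat \<Rightarrow> 'a list" where
  "factor x i j = map x [i..<j]"

definition dill_rule :: "('a list \<Rightarrow> 'a list) \<Rightarrow> nat \<Rightarrow> bool" where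
  "dill_rule f \<delta> \<longleftrightarrow> \<delta> \<ge> 1 \<and> (\<forall>u. length u = \<delta> \<longrightarrow> f u \<noteq> [])"

definition uniform_dill_rule :: "('a list \<Rightarrow> 'a list) \<Rightarrow> nat \<Rightarrow> bool" where
  "uniform_dill_rule f \<delta> \<longleftrightarrow> dill_rule f \<delta> \<and>
     (\<exists>l. \<forall>u. length u = \<delta> \<longrightarrow> length (f u) = l)"

definition dill_map :: "('a list \<Rightarrow> 'a list) \<Rightarrow> nat \<Rightarrow> (nat \<Rightarrow> 'a) \<Rightarrow> (nat \<Rightarrow> 'a)" where
  "dill_map f \<delta> x = iconcat (\<lambda>i. f (factor x i (i + \<delta>)))"

definition hamming_prefix :: "(nat \<Rightarrow> 'a) \<Rightarrow> (nat \<Rightarrow> 'a) \<Rightarrow> nat \<Rightarrow> nat" where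
  "hamming_prefix x y l = card {i. i < l \<and> x i \<noteq> y i}"

definition besicovitch :: "(nat \<Rightarrow> 'a) \<Rightarrow> (nat \<Rightarrow> 'a) \<Rightarrow> real" where
  "besicovitch x y =
     real_of_ereal (limsup (\<lambda>l. ereal (real (hamming_prefix x y l) / real l)))"

definition equicontinuous_point :: "('b \<Rightarrow> 'b \<Rightarrow> real) \<Rightarrow> ('b \<Rightarrow> 'b) \<Rightarrow> 'b \<Rightarrow> bool" where
  "equicontinuous_point d H x \<longleftrightarrow>
     (\<forall>\<epsilon>>0. \<exists>\<eta>>0. \<forall>y. d x y < \<eta> \<longrightarrow> (\<forall>t. d ((H ^^ t) x) ((H ^^ t) y) < \<epsilon>))"

definition equicontinuous :: "('b \<Rightarrow> 'b \<Rightarrow> real) \<Rightarrow> ('b \<Rightarrow> 'b) \<Rightarrow> bool" where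
  "equicontinuous d H \<longleftrightarrow>
     (\<forall>\<epsilon>>0. \<exists>\<eta>>0. \<forall>x y. d x y < \<eta> \<longrightarrow> (\<forall>t. d ((H ^^ t) x) ((H ^^ t) y) < \<epsilon>))"

definition sensitive :: "('b \<Rightarrow> 'b \<Rightarrow> real) \<Rightarrow> ('b \<Rightarrow> 'b) \<Rightarrow> bool" where
  "sensitive d H \<longleftrightarrow>
     (\<exists>\<epsilon>>0. \<forall>x. \<forall>\<eta>>0. \<exists>y. d x y < \<eta> \<and> (\<exists>t. d ((H ^^ t) x) ((H ^^ t) y) > \<epsilon>))"

end

theory Submission
  imports Defs
begin

(* A uniform dill map F whose words all have length L > 0 satisfies F o sigma = sigma^L o F,
   hence (sigma^m o F)^t = sigma^k o F^t for some k depending only on t. The Besicovitch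
   pseudo-metric is an upper density of disagreements, so it is invariant under the shift;
   therefore G = sigma^m o F and F produce the same distances along all orbits, and sensitivity
   and (pointwise) equicontinuity depend on nothing else. *)

lemma funpow_shift: "(shift ^^ k) x = (\<lambda>i. x (i + k))"
  by (induction k arbitrary: x) (auto simp: shift_def funpow_Suc_right)

lemma factor_funpow_shift: "factor ((shift ^^ k) x) i j = factor x (i + k) (j + k)"
  unfolding factor_def funpow_shift by (simp add: list_eq_iff_nth_eq add.commute add.left_commute)

lemma iconcat_uniform:
  assumes "\<And>i. length (w i) = L" and "L > 0"
  shows "iconcat w n = w (n div L) ! (n mod L)"
proof -
  have "n < Suc k * L \<longleftrightarrow> n div L \<le> k" for k
    using div_less_iff_less_mult[OF assms(2), of n "Suc k"] by (simp only: less_Suc_eq_le)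
  then have "(LEAST k. n < Suc k * L) = n div L"
    by (auto intro: Least_equality)
  then show ?thesis
    using assms(1) by (simp add: iconcat_def minus_div_mult_eq_mod)
qed

lemma uniform_dill_ruleE:
  assumes "uniform_dill_rule f \<delta>"
  obtains L where "L > 0" and "\<And>u. length u = \<delta> \<Longrightarrow> length (f u) = L"
proof -
  obtain L where L: "\<And>u. length u = \<delta> \<Longrightarrow> length (f u) = L"
    and nonempty: "\<And>u. length u = \<delta> \<Longrightarrow> f u \<noteq> []"
    using assms unfolding uniform_dill_rule_def dill_rule_def by blast
  have "L > 0"
    using L[of "replicate \<delta> undefined"] nonempty[of "replicate \<delta> undefined"]
    by (metis length_replicate length_greater_0_conv)
  with L that show ?thesis by blast
qed

lemma dill_map_shift:
  assumes "L > 0" and "\<And>u. length u = \<delta> \<Longrightarrow> length (f u) = L"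
  shows "dill_map f \<delta> (shift x) = (shift ^^ L) (dill_map f \<delta> x)"
proof
  fix n
  have nth: "dill_map f \<delta> z n = f (factor z (n div L) (n div L + \<delta>)) ! (n mod L)" for z n
    unfolding dill_map_def using assms by (intro iconcat_uniform) (simp_all add: factor_def)
  have "(n + L) div L = Suc (n div L)" "(n + L) mod L = n mod L"
    using assms(1) by simp_all
  then show "dill_map f \<delta> (shift x) n = (shift ^^ L) (dill_map f \<delta> x) n"
    using factor_funpow_shift[of 1 x] by (simp add: nth funpow_shift)
qed

lemma funpow_semiconj_funpow:
  assumes "\<And>x. H (s x) = (s ^^ L) (H x)"
  shows "H ((s ^^ k) x) = (s ^^ (L * k)) (H x)"
  by (induction k) (simp_all add: assms funpow_add)

lemma funpow_semiconj_orbit: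
  assumes H_shift: "\<And>x. H (s x) = (s ^^ L) (H x)"
    and G_eq: "\<And>x. G x = (s ^^ m) (H x)"
  obtains k where "\<And>x. (G ^^ t) x = (s ^^ k) ((H ^^ t) x)"
proof (induction t arbitrary: thesis)
  case 0
  show ?case by (rule 0[of 0]) simp
next
  case (Suc t)
  then obtain k where k: "\<And>x. (G ^^ t) x = (s ^^ k) ((H ^^ t) x)"
    by blast
  have "(G ^^ Suc t) x = (s ^^ (m + L * k)) ((H ^^ Suc t) x)" for x
  proof -
    have "(G ^^ Suc t) x = G ((s ^^ k) ((H ^^ t) x))"
      by (simp add: k)
    also have "\<dots> = (s ^^ (m + L * k)) ((H ^^ Suc t) x)"
      by (simp add: G_eq funpow_semiconj_funpow[where H = H, OF H_shift] funpow_add)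
    finally show ?thesis .
  qed
  then show ?case
    by (rule Suc.prems)
qed

lemma hamming_prefix_le: "hamming_prefix x y l \<le> l"
proof -
  have "hamming_prefix x y l \<le> card {..<l}"
    unfolding hamming_prefix_def by (rule card_mono) auto
  then show ?thesis by simp
qed

lemma hamming_prefix_0: "hamming_prefix x y 0 = 0"
  by (simp add: hamming_prefix_def)

lemma hamming_prefix_Suc:
  "hamming_prefix x y (Suc l)
     = (if x 0 \<noteq> y 0 then 1 else 0) + hamming_prefix (shift x) (shift y) l"
proof -
  have sum_form: "hamming_prefix x y l = (\<Sum>i<l. if x i \<noteq> y i then 1 else 0)"
    for x y :: "nat \<Rightarrow> 'a" and l
    unfolding hamming_prefix_def by (simp add: sum.If_cases Int_def conj_commute)
  show ?thesis
    unfolding sum_form shift_def sum.lessThan_Suc_shift by simp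
qed

lemma limsup_ereal_eq_if_diff_Suc_tendsto_zero:
  fixes a b :: "nat \<Rightarrow> real"
  assumes "(\<lambda>l. a l - b (Suc l)) \<longlonglongrightarrow> 0"
  shows "limsup (\<lambda>l. ereal (a l)) = limsup (\<lambda>l. ereal (b l))"
proof -
  have "limsup (\<lambda>l. ereal (a l)) = limsup (\<lambda>l. ereal (a l - b (Suc l)) + ereal (b (Suc l)))"
    by simp
  also have "\<dots> = ereal 0 + limsup (\<lambda>l. ereal (b (Suc l)))"
    by (rule ereal_limsup_lim_add[OF tendsto_ereal[OF assms]]) simp
  also have "\<dots> = limsup (\<lambda>l. ereal (b l))"
    using limsup_shift[of "\<lambda>l. ereal (b l)"] by simp
  finally show ?thesis .
qed

lemma besicovitch_shift: "besicovitch (shift x) (shift y) = besicovitch x y"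
proof -
  define a where "a l = real (hamming_prefix (shift x) (shift y) l) / real l" for l
  define b where "b l = real (hamming_prefix x y l) / real l" for l
  define c :: real where "c = (if x 0 \<noteq> y 0 then 1 else 0)"
  have a_bounds: "0 \<le> a l" "a l \<le> 1" for l
    using hamming_prefix_le[of "shift x" "shift y" l] by (auto simp: a_def divide_le_eq_1)
  \<comment> \<open>Also for l = 0, since a 0 = 0 by the convention x / 0 = 0.\<close>
  have "real (Suc l) * b (Suc l) = c + real l * a l" for l
    by (cases "l = 0") (simp_all add: a_def b_def c_def hamming_prefix_Suc hamming_prefix_0)
  then have diff: "a l - b (Suc l) = (a l - c) / real (Suc l)" for l
    by (simp add: field_simps)
  have "\<bar>a l - c\<bar> \<le> 1" for l
    using a_bounds[of l] by (auto simp: c_def)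
  then have "\<bar>a l - b (Suc l)\<bar> \<le> 1 / real (Suc l)" for l
    unfolding diff abs_divide by (simp add: divide_right_mono)
  then have "(\<lambda>l. a l - b (Suc l)) \<longlonglongrightarrow> 0"
    by (intro Lim_null_comparison[OF _ LIMSEQ_inverse_real_of_nat[unfolded inverse_eq_divide]])
      simp
  then show ?thesis
    unfolding besicovitch_def a_def[symmetric] b_def[symmetric]
    by (simp add: limsup_ereal_eq_if_diff_Suc_tendsto_zero)
qed

lemma besicovitch_funpow_shift: "besicovitch ((shift ^^ k) x) ((shift ^^ k) y) = besicovitch x y"
  by (induction k) (simp_all add: besicovitch_shift)

lemma besicovitch_orbit_shift_comp_dill_map:
  assumes "uniform_dill_rule f \<delta>"
  shows "besicovitch ((((shift ^^ m) \<circ> dill_map f \<delta>) ^^ t) x)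
                     ((((shift ^^ m) \<circ> dill_map f \<delta>) ^^ t) y)
       = besicovitch ((dill_map f \<delta> ^^ t) x) ((dill_map f \<delta> ^^ t) y)"
proof -
  obtain L where "L > 0" and "\<And>u. length u = \<delta> \<Longrightarrow> length (f u) = L"
    using uniform_dill_ruleE[OF assms] by metis
  then have "\<And>x. dill_map f \<delta> (shift x) = (shift ^^ L) (dill_map f \<delta> x)"
    by (rule dill_map_shift)
  then obtain k where
    "\<And>x. (((shift ^^ m) \<circ> dill_map f \<delta>) ^^ t) x = (shift ^^ k) ((dill_map f \<delta> ^^ t) x)"
    using funpow_semiconj_orbit[where G = "(shift ^^ m) \<circ> dill_map f \<delta>"] by (metis comp_apply)
  then show ?thesis
    by (simp add: besicovitch_funpow_shift)
qed

theorem mainTheorem5: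
  fixes f :: "'a::finite list \<Rightarrow> 'a list" and \<delta> m :: nat
  assumes "uniform_dill_rule f \<delta>"
  shows "(sensitive besicovitch (dill_map f \<delta>) \<longrightarrow>
            sensitive besicovitch ((shift ^^ m) \<circ> dill_map f \<delta>))
       \<and> (\<forall>x. equicontinuous_point besicovitch (dill_map f \<delta>) x \<longrightarrow>
            equicontinuous_point besicovitch ((shift ^^ m) \<circ> dill_map f \<delta>) x)
       \<and> (equicontinuous besicovitch (dill_map f \<delta>) \<longrightarrow>
            equicontinuous besicovitch ((shift ^^ m) \<circ> dill_map f \<delta>))"
  unfolding sensitive_def equicontinuous_point_def equicontinuous_def
    besicovitch_orbit_shift_comp_dill_map[OF assms]
  by blast

end
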